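(* Let $\mathcal Y$ be a finite set; write $\mathbf F(\mathcal Y,[0,1])$ and $\mathbf F(\mathcal Y,\mathbb R)$ for the sets of functions from $\mathcal Y$ to $[0,1]$ and to $\mathbb R$. Let $\mathcal M:\mathbf F(\mathcal Y,[0,1])\times\mathbf F(\mathcal Y,\mathbb R)\to\mathbf F(\mathcal Y,\mathbb R)$ and assume there exist $f_*\in\mathbf F(\mathcal Y,\mathbb R)$, $\rho\in(0,1)$ and $\beta>0$ such that for all $f\in\mathbf F(\mathcal Y,\mathbb R)$ and $\eta\in\mathbf F(\mathcal Y,[0,1])$: $\mathcal M(\eta,f)(y)\le f_*(y)$ for all $y\in\mathcal Y$, and $$\|f_*-\mathcal M(\eta,f)\|_\infty\le\rho\|f_*-f\|_\infty+\beta\|(f-f_* )_+\|_\infty+\beta\|\eta\|_\infty.$$ Consider: - a family $(\mathcal I^k_y)_{k\ge0,y\in\mathcal Y}$ of $\sigma$-fields with $\mathcal I^k_y\subset\mathcal I^{k+1}_{y'}$ for all $k\ge0$ and all $y,y'\in\mathcal Y$; - a random $\hat f_0\in\mathbf F(\mathcal Y,\mathbb R)$ with $\hat f_0(y)$ being $\mathcal I^0_y$-measurable for all $y$; - for each $k\ge0$, a random $\eta_k\in\mathbf F(\mathcal Y,[0,1])$ which is $\mathcal I^k_y$-measurable for all $y\in\mathcal Y$; - for each $k\ge1$, a random $\xi_k\in\mathbf F(\mathcal Y,\mathbb R)$ with $\xi_k(y)$ being $\mathcal I^k_y$-measurable for all $y$; - for each $k\ge0$, a random $\lambda_k\in\mathbf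 F(\mathcal Y,[0,1])$ with $\lambda_k(y)$ being $\mathcal I^k_y$-measurable for all $y$. Assume that almost surely, for all $y\in\mathcal Y$, $\lim_k\eta_k(y)=0$, $\sum_{k\ge0}\lambda_k(y)=\infty$ and $\sum_{k\ge0}(\lambda_k(y))^2<\infty$, and that there is a constant $C>0$ such that for all $k\ge0$ and $y\in\mathcal Y$, $\mathbb E[\xi_{k+1}(y)\mid\mathcal I^k_y]=0$ and $\mathbb E[(\xi_{k+1}(y))^2\mid\mathcal I^k_y]\le C$. Define recursively, for $k\ge0$ and $y\in\mathcal Y$, $$\hat f_{k+1}(y)=\hat f_k(y)+\lambda_k(y)\big(\mathcal M(\eta_k,\hat f_k)(y)-\hat f_k(y)+\xi_{k+1}(y)\big).$$ Then almost surely, $\lim_{k\to\infty}\hat f_k(y)=f_*(y)$ for all $y\in\mathcal Y$.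
   Context: $\|\cdot\|_\infty$ denotes the max norm over $\mathcal Y$ and $(h)_+(y)=\max\{h(y),0\}$. *)

theory Defs
  imports "HOL-Probability.Probability"
begin

definition supnorm :: "('y::finite \<Rightarrow> real) \<Rightarrow> real" where
  "supnorm h = Max (range (\<lambda>y. \<bar>h y\<bar>))"

definition pospart :: "('y \<Rightarrow> real) \<Rightarrow> ('y \<Rightarrow> real)" where
  "pospart h = (\<lambda>y. max (h y) 0)"

end

theory Submission
  imports Defs
begin

(* Subtracting the tail T k = (SUM n >= k. lam n * xi (n + 1)) of the noise series turns the
   recursion into the noise-free relaxation u (k + 1) = u k + lam k * (d k - u k) for
   u k = fhat k + T k - fstar, where d k <= e k and |d k| <= rho * ||u k|| + beta * ||(u k)_+|| + e k
   with e k -> 0 as soon as T k -> 0.  The noise series converges almost surely: it is a martingale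
   transform with square-summable predictable weights, and Kolmogorov's maximal inequality makes its
   partial sums Cauchy.  For the relaxation, divergence of SUM lam k first forces limsup u k <= 0, so
   the positive part vanishes; after that the sup norm contracts by the factor rho up to vanishing
   errors and hence tends to 0. *)

lemma nonneg_not_summable_imp_filterlim_at_top:
  fixes l :: "nat \<Rightarrow> real"
  assumes l: "\<And>k. 0 \<le> l k" and not_summable: "\<not> summable l"
  shows "filterlim (\<lambda>n. \<Sum>j<n. l j) at_top sequentially"
  unfolding filterlim_at_top eventually_sequentially
proof
  fix Z :: real
  have "\<not> (\<forall>n. (\<Sum>j<n. l j) \<le> Z)"
    using summableI_nonneg_bounded[of l Z] l not_summable by blast
  then obtain n0 where "Z \<le> (\<Sum>j<n0. l j)"
    by (auto simp: not_le intro: less_imp_le)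
  moreover have "(\<Sum>j<n0. l j) \<le> (\<Sum>j<n. l j)" if "n0 \<le> n" for n
    using that l by (intro sum_mono2) auto
  ultimately show "\<exists>n0. \<forall>n\<ge>n0. Z \<le> (\<Sum>j<n. l j)"
    by (meson order_trans)
qed

lemma relaxation_le_exp:
  fixes w l :: "nat \<Rightarrow> real"
  assumes step: "\<And>k. w (Suc k) \<le> (1 - l k) * w k" and l: "\<And>k. 0 \<le> l k \<and> l k \<le> 1"
  shows "w n \<le> max 0 (w 0) * exp (- (\<Sum>j<n. l j))"
proof (induction n)
  case (Suc n)
  have "w (Suc n) \<le> (1 - l n) * (max 0 (w 0) * exp (- (\<Sum>j<n. l j)))"
    using step[of n] Suc.IH l[of n] by (meson mult_left_mono order_trans diff_ge_0_iff_ge)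
  also have "\<dots> \<le> exp (- l n) * (max 0 (w 0) * exp (- (\<Sum>j<n. l j)))"
    using exp_ge_add_one_self[of "- l n"] by (intro mult_right_mono) auto
  also have "\<dots> = max 0 (w 0) * exp (- (\<Sum>j<Suc n. l j))"
    by (simp add: exp_add[symmetric] algebra_simps)
  finally show ?case .
qed simp

lemma relaxation_eventually_le:
  fixes x a l :: "nat \<Rightarrow> real"
  assumes step: "\<And>k. x (Suc k) \<le> (1 - l k) * x k + l k * a k"
    and l: "\<And>k. 0 \<le> l k \<and> l k \<le> 1" and not_summable: "\<not> summable l"
    and a: "\<And>\<epsilon>. 0 < \<epsilon> \<Longrightarrow> eventually (\<lambda>k. a k \<le> A + \<epsilon>) sequentially"
    and "0 < \<epsilon>"
  shows "eventually (\<lambda>k. x k \<le> A + \<epsilon>) sequentially"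
proof -
  obtain K where K: "\<And>k. K \<le> k \<Longrightarrow> a k \<le> A + \<epsilon> / 2"
    using a[of "\<epsilon> / 2"] \<open>0 < \<epsilon>\<close> by (auto simp: eventually_sequentially)
  define w where "w n = x (n + K) - (A + \<epsilon> / 2)" for n
  have "w (Suc n) \<le> (1 - l (n + K)) * w n" for n
  proof -
    have "l (n + K) * a (n + K) \<le> l (n + K) * (A + \<epsilon> / 2)"
      using K[of "n + K"] l[of "n + K"] by (intro mult_left_mono) auto
    then show ?thesis
      using step[of "n + K"] by (simp add: w_def algebra_simps)
  qed
  then have w_le: "w n \<le> max 0 (w 0) * exp (- (\<Sum>j<n. l (j + K)))" for n
    using l by (intro relaxation_le_exp) auto
  have "filterlim (\<lambda>n. \<Sum>j<n. l (j + K)) at_top sequentially"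
    using l not_summable by (intro nonneg_not_summable_imp_filterlim_at_top) (auto simp: summable_iff_shift)
  then have "((\<lambda>n. max 0 (w 0) * exp (- (\<Sum>j<n. l (j + K)))) \<longlongrightarrow> max 0 (w 0) * 0) sequentially"
    by (intro tendsto_mult tendsto_const filterlim_compose[OF exp_at_bot] filterlim_uminus_at_top[THEN iffD1])
  then have "eventually (\<lambda>n. max 0 (w 0) * exp (- (\<Sum>j<n. l (j + K))) < \<epsilon> / 2) sequentially"
    using \<open>0 < \<epsilon>\<close> by (intro order_tendstoD) auto
  then have "eventually (\<lambda>n. x (n + K) \<le> A + \<epsilon>) sequentially"
  proof eventually_elim
    case (elim n)
    then show ?case using w_le[of n] by (simp add: w_def)
  qed
  then show ?thesis
    by (rule eventually_sequentially_seg[THEN iffD1])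
qed

lemma abs_le_supnorm: "\<bar>h y\<bar> \<le> supnorm (h :: 'y::finite \<Rightarrow> real)"
  unfolding supnorm_def by (rule Max_ge) auto

lemma supnorm_leI: "(\<And>y. \<bar>h y\<bar> \<le> c) \<Longrightarrow> supnorm (h :: 'y::finite \<Rightarrow> real) \<le> c"
  unfolding supnorm_def by (subst Max_le_iff) auto

lemma supnorm_nonneg: "0 \<le> supnorm (h :: 'y::finite \<Rightarrow> real)"
  using abs_le_supnorm[of h undefined] by linarith

lemma supnorm_tendsto_zero_iff:
  fixes h :: "nat \<Rightarrow> 'y::finite \<Rightarrow> real"
  shows "(\<lambda>k. supnorm (h k)) \<longlonglongrightarrow> 0 \<longleftrightarrow> (\<forall>y. (\<lambda>k. h k y) \<longlonglongrightarrow> 0)"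
proof
  assume lim: "(\<lambda>k. supnorm (h k)) \<longlonglongrightarrow> 0"
  show "\<forall>y. (\<lambda>k. h k y) \<longlonglongrightarrow> 0"
  proof
    fix y
    have "\<forall>k. norm (h k y) \<le> supnorm (h k)"
      by (simp add: abs_le_supnorm)
    then show "(\<lambda>k. h k y) \<longlonglongrightarrow> 0"
      by (rule Lim_null_comparison[OF always_eventually lim])
  qed
next
  assume "\<forall>y. (\<lambda>k. h k y) \<longlonglongrightarrow> 0"
  then have "(\<lambda>k. \<Sum>y\<in>UNIV. \<bar>h k y\<bar>) \<longlonglongrightarrow> (\<Sum>y\<in>(UNIV :: 'y set). 0)"
    by (intro tendsto_sum) (auto intro: tendsto_rabs_zero)
  then have sum_lim: "(\<lambda>k. \<Sum>y\<in>UNIV. \<bar>h k y\<bar>) \<longlonglongrightarrow> 0"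
    by simp
  have bound: "\<forall>k. norm (supnorm (h k)) \<le> (\<Sum>y\<in>UNIV. \<bar>h k y\<bar>)"
  proof
    fix k
    have "\<bar>h k y\<bar> \<le> (\<Sum>y\<in>UNIV. \<bar>h k y\<bar>)" for y
      by (rule member_le_sum) auto
    then show "norm (supnorm (h k)) \<le> (\<Sum>y\<in>UNIV. \<bar>h k y\<bar>)"
      by (simp add: supnorm_nonneg supnorm_leI)
  qed
  show "(\<lambda>k. supnorm (h k)) \<longlonglongrightarrow> 0"
    by (rule Lim_null_comparison[OF always_eventually[OF bound] sum_lim])
qed

context
  fixes u l :: "nat \<Rightarrow> 'y::finite \<Rightarrow> real" and c :: "nat \<Rightarrow> real" and \<rho> :: real
  assumes step: "\<And>k y. \<bar>u (Suc k) y\<bar> \<le> (1 - l k y) * \<bar>u k y\<bar> + l k y * (\<rho> * supnorm (u k) + c k)"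
    and l: "\<And>k y. 0 \<le> l k y \<and> l k y \<le> 1" and not_summable: "\<And>y. \<not> summable (\<lambda>k. l k y)"
    and c: "c \<longlonglongrightarrow> 0" and \<rho>: "0 \<le> \<rho>" "\<rho> < 1"
begin

lemma supnorm_relaxation_step:
  "supnorm (u (Suc k)) \<le> max (supnorm (u k)) (\<rho> * supnorm (u k) + c k)"
proof (rule supnorm_leI)
  fix y
  have "(1 - l k y) * \<bar>u k y\<bar> \<le> (1 - l k y) * max (supnorm (u k)) (\<rho> * supnorm (u k) + c k)"
    using l[of k y] abs_le_supnorm[of "u k" y] by (intro mult_left_mono) auto
  moreover have "l k y * (\<rho> * supnorm (u k) + c k) \<le> l k y * max (supnorm (u k)) (\<rho> * supnorm (u k) + c k)"
    using l[of k y] by (intro mult_left_mono) auto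
  ultimately show "\<bar>u (Suc k) y\<bar> \<le> max (supnorm (u k)) (\<rho> * supnorm (u k) + c k)"
    using step[of k y] by (simp add: algebra_simps)
qed

lemma eventually_supnorm_relaxation_bounded:
  obtains D where "0 \<le> D" "eventually (\<lambda>k. supnorm (u k) \<le> D) sequentially"
proof -
  obtain K where K: "\<And>k. K \<le> k \<Longrightarrow> c k < 1"
    using order_tendstoD(2)[OF c zero_less_one] by (auto simp: eventually_sequentially)
  define D where "D = max (supnorm (u K)) (1 / (1 - \<rho>))"
  have "1 / (1 - \<rho>) \<le> D"
    by (simp add: D_def)
  then have "1 \<le> D * (1 - \<rho>)"
    using \<rho> pos_divide_le_eq[of "1 - \<rho>" 1 D] by simp
  then have "\<rho> * D + 1 \<le> D"
    by (simp add: algebra_simps)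
  then have "supnorm (u (K + n)) \<le> D" for n
  proof (induction n)
    case (Suc n)
    have "\<rho> * supnorm (u (K + n)) + c (K + n) \<le> \<rho> * D + 1"
      using Suc K[of "K + n"] \<rho> by (intro add_mono mult_left_mono) (auto intro: less_imp_le)
    then show ?case
      using supnorm_relaxation_step[of "K + n"] Suc by simp
  qed (simp add: D_def)
  then have "eventually (\<lambda>k. supnorm (u k) \<le> D) sequentially"
    unfolding eventually_sequentially by (metis le_add_diff_inverse)
  moreover have "0 \<le> D"
    using supnorm_nonneg[of "u K"] by (simp add: D_def)
  ultimately show thesis
    using that by blast
qed

lemma eventually_supnorm_relaxation_contracts:
  assumes D: "eventually (\<lambda>k. supnorm (u k) \<le> D) sequentially" and "0 < \<epsilon>"
  shows "eventually (\<lambda>k. supnorm (u k) \<le> \<rho> * D + \<epsilon>) sequentially"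
proof -
  have drift: "eventually (\<lambda>k. \<rho> * supnorm (u k) + c k \<le> \<rho> * D + \<epsilon>') sequentially"
    if "0 < \<epsilon>'" for \<epsilon>'
    using D order_tendstoD(2)[OF c that]
  proof eventually_elim
    case (elim k)
    then show ?case
      using mult_left_mono[OF elim(1) \<rho>(1)] by simp
  qed
  have "eventually (\<lambda>k. \<bar>u k y\<bar> \<le> \<rho> * D + \<epsilon>) sequentially" for y
    by (rule relaxation_eventually_le[OF step l not_summable drift \<open>0 < \<epsilon>\<close>])
  then have "eventually (\<lambda>k. \<forall>y. \<bar>u k y\<bar> \<le> \<rho> * D + \<epsilon>) sequentially"
    by (rule eventually_all_finite)
  then show ?thesis
    by eventually_elim (rule supnorm_leI, blast)
qed

lemma supnorm_relaxation_tendsto_zero: "(\<lambda>k. supnorm (u k)) \<longlonglongrightarrow> 0"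
proof (rule order_tendstoI)
  fix \<delta> :: real
  assume "0 < \<delta>"
  obtain D where "0 \<le> D" and D: "eventually (\<lambda>k. supnorm (u k) \<le> D) sequentially"
    by (rule eventually_supnorm_relaxation_bounded)
  have iterate: "eventually (\<lambda>k. supnorm (u k) \<le> \<rho> ^ n * D + \<delta> / 2) sequentially" for n
  proof (induction n)
    case 0
    show ?case
      using D by (rule eventually_mono) (use \<open>0 < \<delta>\<close> in simp)
  next
    case (Suc n)
    have "eventually (\<lambda>k. supnorm (u k) \<le> \<rho> * (\<rho> ^ n * D + \<delta> / 2) + (1 - \<rho>) * (\<delta> / 2)) sequentially"
      using \<rho> \<open>0 < \<delta>\<close> by (intro eventually_supnorm_relaxation_contracts[OF Suc]) auto
    moreover have "\<rho> * (\<rho> ^ n * D + \<delta> / 2) + (1 - \<rho>) * (\<delta> / 2) = \<rho> ^ Suc n * D + \<delta> / 2"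
      by (simp add: algebra_simps diff_divide_distrib)
    ultimately show ?case
      by simp
  qed
  have "(\<lambda>n. \<rho> ^ n * D) \<longlonglongrightarrow> 0 * D"
    using \<rho> by (intro tendsto_mult tendsto_const LIMSEQ_power_zero) auto
  then have "eventually (\<lambda>n. \<rho> ^ n * D < \<delta> / 2) sequentially"
    using \<open>0 < \<delta>\<close> by (intro order_tendstoD) auto
  then obtain n where n: "\<rho> ^ n * D < \<delta> / 2"
    by (meson eventually_sequentially order_refl)
  show "eventually (\<lambda>k. supnorm (u k) < \<delta>) sequentially"
    using iterate[of n] by (rule eventually_mono) (use n in linarith)
next
  fix \<delta> :: real
  assume "\<delta> < 0"
  then have "\<forall>k. \<delta> < supnorm (u k)"
    using supnorm_nonneg by (meson less_le_trans)
  then show "eventually (\<lambda>k. \<delta> < supnorm (u k)) sequentially"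
    by (rule always_eventually)
qed

end

lemma one_sided_relaxation_tendsto_zero:
  fixes u d l :: "nat \<Rightarrow> 'y::finite \<Rightarrow> real" and e :: "nat \<Rightarrow> real" and \<rho> \<beta> :: real
  assumes rec: "\<And>k y. u (Suc k) y = u k y + l k y * (d k y - u k y)"
    and l: "\<And>k y. 0 \<le> l k y \<and> l k y \<le> 1" and not_summable: "\<And>y. \<not> summable (\<lambda>k. l k y)"
    and d_le: "\<And>k y. d k y \<le> e k"
    and abs_d_le: "\<And>k y. \<bar>d k y\<bar> \<le> \<rho> * supnorm (u k) + \<beta> * supnorm (pospart (u k)) + e k"
    and e: "e \<longlonglongrightarrow> 0" and \<rho>: "0 \<le> \<rho>" "\<rho> < 1"
  shows "(\<lambda>k. u k y) \<longlonglongrightarrow> 0"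
proof -
  have rec': "u (Suc k) y = (1 - l k y) * u k y + l k y * d k y" for k y
    using rec[of k y] by (simp add: algebra_simps)
  have e_le: "eventually (\<lambda>k. e k \<le> 0 + \<epsilon>) sequentially" if "0 < \<epsilon>" for \<epsilon>
    using order_tendstoD(2)[OF e that] by (auto elim: eventually_mono)
  have upper: "eventually (\<lambda>k. u k y \<le> 0 + \<epsilon>) sequentially" if "0 < \<epsilon>" for y \<epsilon>
  proof (rule relaxation_eventually_le[OF _ l not_summable e_le that])
    show "u (Suc k) y \<le> (1 - l k y) * u k y + l k y * e k" for k
      using rec'[of k y] d_le[of k y] l[of k y] by (simp add: mult_left_mono)
  qed
  have "(\<lambda>k. pospart (u k) y) \<longlonglongrightarrow> 0" for y
  proof (rule order_tendstoI)
    fix a :: real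
    assume "0 < a"
    then have "0 < a / 2"
      by simp
    from upper[where y=y, OF this] show "eventually (\<lambda>k. pospart (u k) y < a) sequentially"
      by (rule eventually_mono) (use \<open>0 < a\<close> in \<open>simp add: pospart_def\<close>)
  qed (simp add: pospart_def less_max_iff_disj always_eventually)
  then have "(\<lambda>k. supnorm (pospart (u k))) \<longlonglongrightarrow> 0"
    by (simp add: supnorm_tendsto_zero_iff)
  then have c: "(\<lambda>k. \<beta> * supnorm (pospart (u k)) + e k) \<longlonglongrightarrow> 0"
    using tendsto_add[OF tendsto_mult_right_zero e] by simp
  have "\<bar>u (Suc k) y\<bar> \<le> (1 - l k y) * \<bar>u k y\<bar>
      + l k y * (\<rho> * supnorm (u k) + (\<beta> * supnorm (pospart (u k)) + e k))" for k y
  proof -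
    have "\<bar>u (Suc k) y\<bar> \<le> (1 - l k y) * \<bar>u k y\<bar> + l k y * \<bar>d k y\<bar>"
      using rec'[of k y] l[of k y] abs_triangle_ineq[of "(1 - l k y) * u k y" "l k y * d k y"]
      by (simp add: abs_mult)
    also have "\<dots> \<le> (1 - l k y) * \<bar>u k y\<bar>
        + l k y * (\<rho> * supnorm (u k) + (\<beta> * supnorm (pospart (u k)) + e k))"
      using abs_d_le[of k y] l[of k y] by (intro add_left_mono mult_left_mono) auto
    finally show ?thesis .
  qed
  then have "(\<lambda>k. supnorm (u k)) \<longlonglongrightarrow> 0"
    by (rule supnorm_relaxation_tendsto_zero[OF _ l not_summable c \<rho>])
  then show ?thesis
    by (simp add: supnorm_tendsto_zero_iff)
qed

lemma contraction_bound_shift: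
  fixes f g t fstar :: "'y::finite \<Rightarrow> real"
  assumes contr: "supnorm (\<lambda>y. fstar y - g y)
      \<le> \<rho> * supnorm (\<lambda>y. fstar y - f y) + \<beta> * supnorm (pospart (\<lambda>y. f y - fstar y)) + r"
    and "0 \<le> \<rho>" "0 \<le> \<beta>"
  shows "\<bar>g y + t y - fstar y\<bar>
      \<le> \<rho> * supnorm (\<lambda>y. f y + t y - fstar y) + \<beta> * supnorm (pospart (\<lambda>y. f y + t y - fstar y))
         + ((\<rho> + \<beta> + 1) * supnorm t + r)"
proof -
  define u where "u y = f y + t y - fstar y" for y
  have "supnorm (\<lambda>y. fstar y - f y) \<le> supnorm u + supnorm t"
  proof (rule supnorm_leI)
    fix y
    show "\<bar>fstar y - f y\<bar> \<le> supnorm u + supnorm t"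
      using abs_le_supnorm[of u y] abs_le_supnorm[of t y] by (simp add: u_def)
  qed
  moreover have "supnorm (pospart (\<lambda>y. f y - fstar y)) \<le> supnorm (pospart u) + supnorm t"
  proof (rule supnorm_leI)
    fix y
    show "\<bar>pospart (\<lambda>y. f y - fstar y) y\<bar> \<le> supnorm (pospart u) + supnorm t"
      using abs_le_supnorm[of "pospart u" y] abs_le_supnorm[of t y] by (auto simp: u_def pospart_def)
  qed
  ultimately have "supnorm (\<lambda>y. fstar y - g y) \<le> \<rho> * supnorm u + \<beta> * supnorm (pospart u) + (\<rho> + \<beta>) * supnorm t + r"
    using contr mult_left_mono[of _ _ \<rho>] mult_left_mono[of _ _ \<beta>] \<open>0 \<le> \<rho>\<close> \<open>0 \<le> \<beta>\<close>
    by (fastforce simp: algebra_simps)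
  moreover have "\<bar>g y + t y - fstar y\<bar> \<le> supnorm (\<lambda>y. fstar y - g y) + supnorm t"
    using abs_le_supnorm[of "\<lambda>y. fstar y - g y" y] abs_le_supnorm[of t y] by simp
  ultimately show ?thesis
    unfolding u_def by (simp add: algebra_simps)
qed

lemma relaxation_with_summable_noise_tendsto:
  fixes F G l \<xi> :: "nat \<Rightarrow> 'y::finite \<Rightarrow> real" and fstar :: "'y \<Rightarrow> real" and r :: "nat \<Rightarrow> real"
    and \<rho> \<beta> :: real
  assumes rec: "\<And>k y. F (Suc k) y = F k y + l k y * (G k y - F k y + \<xi> (Suc k) y)"
    and l: "\<And>k y. 0 \<le> l k y \<and> l k y \<le> 1" and not_summable: "\<And>y. \<not> summable (\<lambda>k. l k y)"
    and noise: "\<And>y. summable (\<lambda>k. l k y * \<xi> (Suc k) y)"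
    and G_le: "\<And>k y. G k y \<le> fstar y"
    and contr: "\<And>k. supnorm (\<lambda>y. fstar y - G k y)
      \<le> \<rho> * supnorm (\<lambda>y. fstar y - F k y) + \<beta> * supnorm (pospart (\<lambda>y. F k y - fstar y)) + r k"
    and r: "r \<longlonglongrightarrow> 0" "\<And>k. 0 \<le> r k" and \<rho>: "0 \<le> \<rho>" "\<rho> < 1" and \<beta>: "0 \<le> \<beta>"
  shows "(\<lambda>k. F k y) \<longlonglongrightarrow> fstar y"
proof -
  define T where "T k y = (\<Sum>n. l (n + k) y * \<xi> (Suc (n + k)) y)" for k y
  have T_Suc: "T k y = l k y * \<xi> (Suc k) y + T (Suc k) y" for k y
    using suminf_split_head[OF summable_ignore_initial_segment[OF noise[of y], of k]]
    by (simp add: T_def)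
  have T: "(\<lambda>k. T k y) \<longlonglongrightarrow> 0" for y
    unfolding T_def using suminf_exist_split2[OF noise[of y]] by simp
  define e where "e k = (\<rho> + \<beta> + 1) * supnorm (T k) + r k" for k
  have "(\<lambda>k. supnorm (T k)) \<longlonglongrightarrow> 0"
    using T by (simp add: supnorm_tendsto_zero_iff)
  then have e: "e \<longlonglongrightarrow> 0"
    unfolding e_def using tendsto_add[OF tendsto_mult_right_zero r(1)] by simp
  define u where "u k y = F k y + T k y - fstar y" for k y
  define d where "d k y = G k y + T k y - fstar y" for k y
  have u_Suc: "u (Suc k) y = u k y + l k y * (d k y - u k y)" for k y
    using rec[of k y] T_Suc[of k y] by (simp add: u_def d_def algebra_simps)
  have d_le: "d k y \<le> e k" for k y
  proof -
    have "1 * supnorm (T k) \<le> (\<rho> + \<beta> + 1) * supnorm (T k)"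
      using \<rho> \<beta> supnorm_nonneg[of "T k"] by (intro mult_right_mono) auto
    then show ?thesis
      using G_le[of k y] abs_le_supnorm[of "T k" y] r(2)[of k] by (simp add: d_def e_def)
  qed
  have abs_d_le: "\<bar>d k y\<bar> \<le> \<rho> * supnorm (u k) + \<beta> * supnorm (pospart (u k)) + e k" for k y
    using contraction_bound_shift[OF contr[of k] \<rho>(1) \<beta>, where t="T k" and y=y]
    by (simp add: d_def e_def u_def[abs_def])
  have "(\<lambda>k. u k y) \<longlonglongrightarrow> 0"
    by (rule one_sided_relaxation_tendsto_zero[OF u_Suc l not_summable d_le abs_d_le e \<rho>])
  then have "(\<lambda>k. u k y - T k y + fstar y) \<longlonglongrightarrow> 0 - 0 + fstar y"
    by (intro tendsto_add tendsto_diff T tendsto_const)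
  then show ?thesis
    by (simp add: u_def)
qed

lemma operator_relaxation_with_summable_noise_tendsto:
  fixes Mop :: "('y::finite \<Rightarrow> real) \<Rightarrow> ('y \<Rightarrow> real) \<Rightarrow> ('y \<Rightarrow> real)"
    and F \<eta> l \<xi> :: "nat \<Rightarrow> 'y \<Rightarrow> real" and fstar :: "'y \<Rightarrow> real" and \<rho> \<beta> :: real
  assumes rec: "\<And>k y. F (Suc k) y = F k y + l k y * (Mop (\<eta> k) (F k) y - F k y + \<xi> (Suc k) y)"
    and l: "\<And>k y. 0 \<le> l k y \<and> l k y \<le> 1" and not_summable: "\<And>y. \<not> summable (\<lambda>k. l k y)"
    and noise: "\<And>y. summable (\<lambda>k. l k y * \<xi> (Suc k) y)"
    and \<eta>: "\<And>k y. 0 \<le> \<eta> k y \<and> \<eta> k y \<le> 1" "\<And>y. (\<lambda>k. \<eta> k y) \<longlonglongrightarrow> 0"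
    and M_le: "\<And>\<eta>' f y. (\<forall>z. 0 \<le> \<eta>' z \<and> \<eta>' z \<le> 1) \<Longrightarrow> Mop \<eta>' f y \<le> fstar y"
    and M_contr: "\<And>\<eta>' f. (\<forall>z. 0 \<le> \<eta>' z \<and> \<eta>' z \<le> 1) \<Longrightarrow>
        supnorm (\<lambda>y. fstar y - Mop \<eta>' f y)
          \<le> \<rho> * supnorm (\<lambda>y. fstar y - f y) + \<beta> * supnorm (pospart (\<lambda>y. f y - fstar y))
             + \<beta> * supnorm \<eta>'"
    and \<rho>: "0 \<le> \<rho>" "\<rho> < 1" and \<beta>: "0 \<le> \<beta>"
  shows "(\<lambda>k. F k y) \<longlonglongrightarrow> fstar y"
proof (rule relaxation_with_summable_noise_tendsto[where G="\<lambda>k. Mop (\<eta> k) (F k)"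
      and r="\<lambda>k. \<beta> * supnorm (\<eta> k)" and \<rho>=\<rho> and \<beta>=\<beta>])
  have "(\<lambda>k. supnorm (\<eta> k)) \<longlonglongrightarrow> 0"
    using \<eta>(2) by (simp add: supnorm_tendsto_zero_iff)
  then show "(\<lambda>k. \<beta> * supnorm (\<eta> k)) \<longlonglongrightarrow> 0"
    by (rule tendsto_mult_right_zero)
  show "0 \<le> \<beta> * supnorm (\<eta> k)" for k
    using \<beta> supnorm_nonneg[of "\<eta> k"] by simp
qed (use rec l not_summable noise \<eta>(1) M_le M_contr \<rho> \<beta> in auto)

lemma stopped_partial_sum_abs_ge:
  fixes X S :: "nat \<Rightarrow> real"
  assumes S: "\<And>n. S n = (\<Sum>j<n. X j)" and i: "i \<in> {m..m+p}" "\<epsilon> \<le> \<bar>S i - S m\<bar>"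
  shows "\<epsilon> \<le> \<bar>\<Sum>j<m+p. (if m \<le> j \<and> (\<forall>i\<in>{m..j}. \<bar>S i - S m\<bar> < \<epsilon>) then X j else 0)\<bar>"
proof -
  define P where "P i \<longleftrightarrow> m \<le> i \<and> \<epsilon> \<le> \<bar>S i - S m\<bar>" for i
  define exit where "exit = (LEAST i. P i)"
  have "P i"
    using i by (simp add: P_def)
  then have exit: "m \<le> exit" "\<epsilon> \<le> \<bar>S exit - S m\<bar>" "exit \<le> i"
    using LeastI[of P i] Least_le[of P i] by (simp_all add: exit_def P_def)
  have before_exit: "(m \<le> j \<and> (\<forall>i\<in>{m..j}. \<bar>S i - S m\<bar> < \<epsilon>)) \<longleftrightarrow> m \<le> j \<and> j < exit" for j
  proof
    assume j: "m \<le> j \<and> (\<forall>i\<in>{m..j}. \<bar>S i - S m\<bar> < \<epsilon>)"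
    show "m \<le> j \<and> j < exit"
    proof (rule ccontr)
      assume "\<not> (m \<le> j \<and> j < exit)"
      then have "exit \<in> {m..j}"
        using j exit by auto
      then show False
        using j exit by fastforce
    qed
  next
    assume j: "m \<le> j \<and> j < exit"
    have "\<not> P i" if "i < exit" for i
      using not_less_Least[OF that[unfolded exit_def]] .
    then show "m \<le> j \<and> (\<forall>i\<in>{m..j}. \<bar>S i - S m\<bar> < \<epsilon>)"
      using j by (metis P_def atLeastAtMost_iff le_less_trans not_le)
  qed
  have "(\<Sum>j<m+p. (if m \<le> j \<and> (\<forall>i\<in>{m..j}. \<bar>S i - S m\<bar> < \<epsilon>) then X j else 0))
      = (\<Sum>j\<in>{..<m+p} \<inter> {j. m \<le> j \<and> j < exit}. X j)"
    unfolding before_exit by (simp add: sum.If_cases)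
  also have "{..<m+p} \<inter> {j. m \<le> j \<and> j < exit} = {m..<exit}"
    using exit i by auto
  also have "(\<Sum>j\<in>{m..<exit}. X j) = S exit - S m"
    unfolding S using sum_diff_nat_ivl[of 0 m exit X] exit by (simp add: atLeast0LessThan)
  finally show ?thesis
    using exit by simp
qed

lemma Cauchy_if_eventually_close_to_anchor:
  fixes S :: "nat \<Rightarrow> real"
  assumes "\<And>\<epsilon>. 0 < \<epsilon> \<Longrightarrow> \<exists>m. \<forall>i\<ge>m. \<bar>S i - S m\<bar> < \<epsilon>"
  shows "Cauchy S"
proof (rule CauchyI)
  fix e :: real
  assume "0 < e"
  then obtain m where m: "\<And>i. m \<le> i \<Longrightarrow> \<bar>S i - S m\<bar> < e / 2"
    using assms[of "e / 2"] by auto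
  have "norm (S i - S j) < e" if "m \<le> i" "m \<le> j" for i j
    using m[OF that(1)] m[OF that(2)] unfolding real_norm_def abs_less_iff by linarith
  then show "\<exists>M. \<forall>i\<ge>M. \<forall>j\<ge>M. norm (S i - S j) < e"
    by blast
qed

lemma truncated_square_sum_le:
  fixes l :: "nat \<Rightarrow> real"
  assumes "0 \<le> N"
  shows "(\<Sum>j<n. (if (\<Sum>i\<le>j. (l i)\<^sup>2) \<le> N then l j else 0)\<^sup>2) \<le> N"
proof -
  define J where "J = {j. j < n \<and> (\<Sum>i\<le>j. (l i)\<^sup>2) \<le> N}"
  have "(\<Sum>j<n. (if (\<Sum>i\<le>j. (l i)\<^sup>2) \<le> N then l j else 0)\<^sup>2) = (\<Sum>j\<in>J. (l j)\<^sup>2)"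
    unfolding J_def by (simp add: if_distrib[of power2] sum.If_cases Collect_conj_eq lessThan_def Int_commute)
  also have "\<dots> \<le> N"
  proof (cases "J = {}")
    case False
    have "finite J"
      by (simp add: J_def)
    then have "(\<Sum>j\<in>J. (l j)\<^sup>2) \<le> (\<Sum>i\<le>Max J. (l i)\<^sup>2)"
      by (intro sum_mono2) auto
    also have "\<dots> \<le> N"
      using Max_in[OF \<open>finite J\<close> False] by (simp add: J_def)
    finally show ?thesis .
  qed (simp add: \<open>0 \<le> N\<close>)
  finally show ?thesis .
qed

lemma (in finite_measure) integrable_square_if_abs_le_1:
  fixes f :: "'a \<Rightarrow> real"
  assumes "f \<in> borel_measurable M" and "\<And>\<omega>. \<bar>f \<omega>\<bar> \<le> 1"
  shows "integrable M (\<lambda>\<omega>. (f \<omega>)\<^sup>2)"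
  by (rule integrable_const_bound[where B=1]) (use assms in \<open>auto simp: abs_square_le_1\<close>)

locale martingale_differences = prob_space M for M :: "'a measure" +
  fixes G :: "nat \<Rightarrow> 'a measure" and x :: "nat \<Rightarrow> 'a \<Rightarrow> real" and C :: real
  assumes subalgebra_G: "\<And>k. subalgebra M (G k)"
    and sets_G_Suc: "\<And>k. sets (G k) \<subseteq> sets (G (Suc k))"
    and x_measurable: "\<And>k. x k \<in> borel_measurable (G (Suc k))"
    and C_nonneg: "0 \<le> C"
    and cond_exp_x: "\<And>k. AE \<omega> in M. real_cond_exp M (G k) (x k) \<omega> = 0"
    and cond_exp_x_square: "\<And>k. AE \<omega> in M. nn_cond_exp M (G k) (\<lambda>\<omega>. ennreal ((x k \<omega>)\<^sup>2)) \<omega> \<le> ennreal C"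
begin

definition martingale_transform :: "(nat \<Rightarrow> 'a \<Rightarrow> real) \<Rightarrow> nat \<Rightarrow> 'a \<Rightarrow> real" where
  "martingale_transform a n \<omega> = (\<Sum>j<n. a j \<omega> * x j \<omega>)"

lemma measurable_G_mono:
  assumes "i \<le> j" and "f \<in> borel_measurable (G i)"
  shows "f \<in> borel_measurable (G j)"
proof -
  have "sets (G i) \<subseteq> sets (G j)"
    using lift_Suc_mono_le[of "\<lambda>k. sets (G k)", OF sets_G_Suc \<open>i \<le> j\<close>] .
  then have "subalgebra (G j) (G i)"
    using subalgebra_G[of i] subalgebra_G[of j] by (auto simp: subalgebra_def)
  then show ?thesis
    using measurable_from_subalg assms(2) by blast
qed

lemma measurable_G_imp_M: "f \<in> borel_measurable (G k) \<Longrightarrow> f \<in> borel_measurable M"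
  by (rule measurable_from_subalg[OF subalgebra_G])

lemma x_borel_measurable [measurable]: "x k \<in> borel_measurable M"
  by (rule measurable_G_imp_M[OF x_measurable])

lemma sigma_finite_subalgebra_G: "sigma_finite_subalgebra M (G k)"
proof -
  have "finite_measure_subalgebra M (G k)"
    by (simp add: finite_measure_axioms finite_measure_subalgebra.intro
        finite_measure_subalgebra_axioms.intro subalgebra_G)
  then show ?thesis
    by (rule finite_measure_subalgebra_is_sigma_finite)
qed

lemma weighted_x_square:
  assumes c: "c \<in> borel_measurable (G k)" and c_le: "\<And>\<omega>. \<bar>c \<omega>\<bar> \<le> 1"
  shows integrable_weighted_x_square: "integrable M (\<lambda>\<omega>. (c \<omega>)\<^sup>2 * (x k \<omega>)\<^sup>2)"
    and integral_weighted_x_square_le: "(\<integral>\<omega>. (c \<omega>)\<^sup>2 * (x k \<omega>)\<^sup>2 \<partial>M) \<le> C * (\<integral>\<omega>. (c \<omega>)\<^sup>2 \<partial>M)"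
proof -
  interpret G: sigma_finite_subalgebra M "G k"
    by (rule sigma_finite_subalgebra_G)
  have [measurable]: "c \<in> borel_measurable M"
    using measurable_G_imp_M[OF c] .
  have c2: "integrable M (\<lambda>\<omega>. (c \<omega>)\<^sup>2)"
    using integrable_square_if_abs_le_1 c_le by simp
  have "(\<integral>\<^sup>+\<omega>. ennreal ((c \<omega>)\<^sup>2 * (x k \<omega>)\<^sup>2) \<partial>M)
      = (\<integral>\<^sup>+\<omega>. ennreal ((c \<omega>)\<^sup>2) * nn_cond_exp M (G k) (\<lambda>\<omega>. ennreal ((x k \<omega>)\<^sup>2)) \<omega> \<partial>M)"
    using c by (simp add: ennreal_mult G.nn_cond_exp_intg)
  also have "\<dots> \<le> (\<integral>\<^sup>+\<omega>. ennreal ((c \<omega>)\<^sup>2 * C) \<partial>M)"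
    using cond_exp_x_square[of k] C_nonneg
    by (intro nn_integral_mono_AE) (auto elim!: eventually_mono intro: mult_left_mono simp: ennreal_mult)
  also have "\<dots> = ennreal (C * (\<integral>\<omega>. (c \<omega>)\<^sup>2 \<partial>M))"
    using c2 C_nonneg by (subst nn_integral_eq_integral) (auto simp: mult.commute)
  finally have le: "(\<integral>\<^sup>+\<omega>. ennreal ((c \<omega>)\<^sup>2 * (x k \<omega>)\<^sup>2) \<partial>M) \<le> ennreal (C * (\<integral>\<omega>. (c \<omega>)\<^sup>2 \<partial>M))" .
  then show int: "integrable M (\<lambda>\<omega>. (c \<omega>)\<^sup>2 * (x k \<omega>)\<^sup>2)"
    by (intro integrableI_bounded) (auto simp: top.not_eq_extremum le_less_trans)
  show "(\<integral>\<omega>. (c \<omega>)\<^sup>2 * (x k \<omega>)\<^sup>2 \<partial>M) \<le> C * (\<integral>\<omega>. (c \<omega>)\<^sup>2 \<partial>M)"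
    using le C_nonneg by (simp add: nn_integral_eq_integral[OF int] ennreal_le_iff)
qed

lemma x_orthogonal_to_G:
  assumes Z: "Z \<in> borel_measurable (G k)" and Z2: "integrable M (\<lambda>\<omega>. (Z \<omega>)\<^sup>2)"
  shows "integrable M (\<lambda>\<omega>. Z \<omega> * x k \<omega>)" and "(\<integral>\<omega>. Z \<omega> * x k \<omega> \<partial>M) = 0"
proof -
  interpret G: sigma_finite_subalgebra M "G k"
    by (rule sigma_finite_subalgebra_G)
  have [measurable]: "Z \<in> borel_measurable M"
    using measurable_G_imp_M[OF Z] .
  have x2: "integrable M (\<lambda>\<omega>. (x k \<omega>)\<^sup>2)"
    using integrable_weighted_x_square[of "\<lambda>_. 1" k] by simp
  have "norm (Z \<omega> * x k \<omega>) \<le> norm ((Z \<omega>)\<^sup>2 + (x k \<omega>)\<^sup>2)" for \<omega>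
  proof -
    have "2 * \<bar>Z \<omega>\<bar> * \<bar>x k \<omega>\<bar> \<le> (Z \<omega>)\<^sup>2 + (x k \<omega>)\<^sup>2"
      using sum_squares_bound[of "\<bar>Z \<omega>\<bar>" "\<bar>x k \<omega>\<bar>"] by simp
    moreover have "0 \<le> \<bar>Z \<omega>\<bar> * \<bar>x k \<omega>\<bar>"
      by simp
    ultimately have "\<bar>Z \<omega>\<bar> * \<bar>x k \<omega>\<bar> \<le> (Z \<omega>)\<^sup>2 + (x k \<omega>)\<^sup>2"
      by linarith
    then show ?thesis
      by (simp add: abs_mult)
  qed
  then show int: "integrable M (\<lambda>\<omega>. Z \<omega> * x k \<omega>)"
    by (intro Bochner_Integration.integrable_bound[OF Bochner_Integration.integrable_add[OF Z2 x2]]) auto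
  have "(\<integral>\<omega>. Z \<omega> * x k \<omega> \<partial>M) = (\<integral>\<omega>. Z \<omega> * real_cond_exp M (G k) (x k) \<omega> \<partial>M)"
    using int Z by (intro G.real_cond_exp_intg(2)[symmetric]) auto
  also have "\<dots> = 0"
    using cond_exp_x[of k] by (intro integral_eq_zero_AE) (auto elim: eventually_mono)
  finally show "(\<integral>\<omega>. Z \<omega> * x k \<omega> \<partial>M) = 0" .
qed

lemma measurable_martingale_transform:
  assumes a: "\<And>j. a j \<in> borel_measurable (G j)"
  shows "martingale_transform a n \<in> borel_measurable (G n)"
proof (induction n)
  case (Suc n)
  have "martingale_transform a (Suc n) = (\<lambda>\<omega>. martingale_transform a n \<omega> + a n \<omega> * x n \<omega>)"
    by (simp add: martingale_transform_def fun_eq_iff)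
  moreover have "martingale_transform a n \<in> borel_measurable (G (Suc n))"
    by (rule measurable_G_mono[OF _ Suc]) simp
  moreover have "a n \<in> borel_measurable (G (Suc n))"
    by (rule measurable_G_mono[OF _ a]) simp
  ultimately show ?case
    using x_measurable[of n] by simp
qed (simp add: martingale_transform_def)

lemma integral_square_martingale_transform:
  assumes a: "\<And>j. a j \<in> borel_measurable (G j)" and a_le: "\<And>j \<omega>. \<bar>a j \<omega>\<bar> \<le> 1"
  shows "integrable M (\<lambda>\<omega>. (martingale_transform a n \<omega>)\<^sup>2)
    \<and> (\<integral>\<omega>. (martingale_transform a n \<omega>)\<^sup>2 \<partial>M) = (\<Sum>j<n. \<integral>\<omega>. (a j \<omega>)\<^sup>2 * (x j \<omega>)\<^sup>2 \<partial>M)"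
proof (induction n)
  case (Suc n)
  define Y where "Y = martingale_transform a n"
  have Y: "Y \<in> borel_measurable (G n)"
    unfolding Y_def by (rule measurable_martingale_transform[OF a])
  have [measurable]: "Y \<in> borel_measurable M" "a n \<in> borel_measurable M"
    using measurable_G_imp_M[OF Y] measurable_G_imp_M[OF a] by auto
  have Y2: "integrable M (\<lambda>\<omega>. (Y \<omega>)\<^sup>2)"
    using Suc.IH by (simp add: Y_def)
  have "norm ((Y \<omega> * a n \<omega>)\<^sup>2) \<le> norm ((Y \<omega>)\<^sup>2)" for \<omega>
    using mult_left_mono[OF abs_square_le_1[THEN iffD2, OF a_le[of n \<omega>]], of "(Y \<omega>)\<^sup>2"]
    by (simp add: power_mult_distrib)
  then have "integrable M (\<lambda>\<omega>. (Y \<omega> * a n \<omega>)\<^sup>2)"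
    by (intro Bochner_Integration.integrable_bound[OF Y2]) auto
  then have cross: "integrable M (\<lambda>\<omega>. Y \<omega> * a n \<omega> * x n \<omega>)" "(\<integral>\<omega>. Y \<omega> * a n \<omega> * x n \<omega> \<partial>M) = 0"
    using x_orthogonal_to_G[of "\<lambda>\<omega>. Y \<omega> * a n \<omega>" n] Y a[of n] by auto
  have diag: "integrable M (\<lambda>\<omega>. (a n \<omega>)\<^sup>2 * (x n \<omega>)\<^sup>2)"
    by (rule integrable_weighted_x_square[OF a a_le])
  have "(\<lambda>\<omega>. (martingale_transform a (Suc n) \<omega>)\<^sup>2)
      = (\<lambda>\<omega>. (Y \<omega>)\<^sup>2 + 2 * (Y \<omega> * a n \<omega> * x n \<omega>) + (a n \<omega>)\<^sup>2 * (x n \<omega>)\<^sup>2)"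
    by (simp add: Y_def martingale_transform_def fun_eq_iff power2_eq_square algebra_simps)
  then show ?case
    using Suc.IH Y2 cross diag by (simp add: Y_def)
qed (simp add: martingale_transform_def)

lemma integral_square_martingale_transform_le:
  assumes a: "\<And>j. a j \<in> borel_measurable (G j)" and a_le: "\<And>j \<omega>. \<bar>a j \<omega>\<bar> \<le> 1"
  shows "(\<integral>\<omega>. (martingale_transform a n \<omega>)\<^sup>2 \<partial>M) \<le> C * (\<Sum>j<n. \<integral>\<omega>. (a j \<omega>)\<^sup>2 \<partial>M)"
  using integral_square_martingale_transform[OF a a_le, of n] integral_weighted_x_square_le[OF a a_le]
  by (simp add: sum_distrib_left sum_mono)

lemma measurable_stopped_weight:
  assumes a: "\<And>j. a j \<in> borel_measurable (G j)"
  shows "(\<lambda>\<omega>. if m \<le> j \<and> (\<forall>i\<in>{m..j}. \<bar>martingale_transform a i \<omega> - martingale_transform a m \<omega>\<bar> < \<epsilon>)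
      then a j \<omega> else 0) \<in> borel_measurable (G j)"
proof (cases "m \<le> j")
  case True
  have [measurable]: "a j \<in> borel_measurable (G j)"
    by (rule a)
  have S: "martingale_transform a i \<in> borel_measurable (G j)" if "i \<le> j" for i
    using measurable_G_mono[OF that measurable_martingale_transform[OF a]] .
  have "Measurable.pred (G j)
      (\<lambda>\<omega>. \<forall>i\<in>{m..j}. \<bar>martingale_transform a i \<omega> - martingale_transform a m \<omega>\<bar> < \<epsilon>)"
  proof (rule pred_intros_finite(3))
    fix i
    assume "i \<in> {m..j}"
    then have [measurable]: "martingale_transform a i \<in> borel_measurable (G j)"
      "martingale_transform a m \<in> borel_measurable (G j)"
      using S True by auto
    show "Measurable.pred (G j) (\<lambda>\<omega>. \<bar>martingale_transform a i \<omega> - martingale_transform a m \<omega>\<bar> < \<epsilon>)"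
      by measurable
  qed simp
  then show ?thesis
    using True by measurable
qed simp

text \<open>Kolmogorov's maximal inequality, proved by stopping the transform when it first leaves the
  \<open>\<epsilon>\<close>-ball around its value at time \<open>m\<close>.\<close>
lemma maximal_inequality:
  assumes a: "\<And>j. a j \<in> borel_measurable (G j)" and a_le: "\<And>j \<omega>. \<bar>a j \<omega>\<bar> \<le> 1" and "0 < \<epsilon>"
  shows "measure M {\<omega>\<in>space M. \<exists>i\<in>{m..m+p}. \<epsilon> \<le> \<bar>martingale_transform a i \<omega> - martingale_transform a m \<omega>\<bar>}
     \<le> C / \<epsilon>\<^sup>2 * (\<Sum>j\<in>{m..<m+p}. \<integral>\<omega>. (a j \<omega>)\<^sup>2 \<partial>M)"
proof -
  define S where "S = martingale_transform a"
  define c where "c j \<omega> = (if m \<le> j \<and> (\<forall>i\<in>{m..j}. \<bar>S i \<omega> - S m \<omega>\<bar> < \<epsilon>) then a j \<omega> else 0)" for j \<omega>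
  have c: "c j \<in> borel_measurable (G j)" for j
    unfolding c_def S_def by (rule measurable_stopped_weight[OF a])
  have c_le: "\<bar>c j \<omega>\<bar> \<le> 1" for j \<omega>
    using a_le[of j \<omega>] by (simp add: c_def)
  define Y where "Y = martingale_transform c (m + p)"
  have [measurable]: "Y \<in> borel_measurable M" "\<And>j. a j \<in> borel_measurable M" "\<And>j. c j \<in> borel_measurable M"
    unfolding Y_def using measurable_G_imp_M measurable_martingale_transform c a by blast+
  have "{\<omega>\<in>space M. \<exists>i\<in>{m..m+p}. \<epsilon> \<le> \<bar>S i \<omega> - S m \<omega>\<bar>} \<subseteq> {\<omega>\<in>space M. \<epsilon>\<^sup>2 \<le> (Y \<omega>)\<^sup>2}"
  proof safe
    fix \<omega> i
    assume i: "i \<in> {m..m+p}" "\<epsilon> \<le> \<bar>S i \<omega> - S m \<omega>\<bar>"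
    have "Y \<omega> = (\<Sum>j<m+p. if m \<le> j \<and> (\<forall>i\<in>{m..j}. \<bar>S i \<omega> - S m \<omega>\<bar> < \<epsilon>) then a j \<omega> * x j \<omega> else 0)"
      unfolding Y_def martingale_transform_def by (intro sum.cong) (auto simp: c_def)
    then have "\<epsilon> \<le> \<bar>Y \<omega>\<bar>"
      using stopped_partial_sum_abs_ge[of "\<lambda>n. S n \<omega>" "\<lambda>j. a j \<omega> * x j \<omega>", OF _ i]
      by (simp add: S_def martingale_transform_def)
    then show "\<epsilon>\<^sup>2 \<le> (Y \<omega>)\<^sup>2"
      using power_mono[of \<epsilon> "\<bar>Y \<omega>\<bar>" 2] \<open>0 < \<epsilon>\<close> by simp
  qed
  then have "measure M {\<omega>\<in>space M. \<exists>i\<in>{m..m+p}. \<epsilon> \<le> \<bar>S i \<omega> - S m \<omega>\<bar>}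
      \<le> measure M {\<omega>\<in>space M. \<epsilon>\<^sup>2 \<le> (Y \<omega>)\<^sup>2}"
    by (intro finite_measure_mono) measurable
  also have "\<dots> \<le> (\<integral>\<omega>. (Y \<omega>)\<^sup>2 \<partial>M) / \<epsilon>\<^sup>2"
    using integral_square_martingale_transform[OF c c_le] \<open>0 < \<epsilon>\<close>
    by (intro integral_Markov_inequality_measure[where A="space M"]) (auto simp: Y_def)
  also have "\<dots> \<le> C * (\<Sum>j<m+p. \<integral>\<omega>. (c j \<omega>)\<^sup>2 \<partial>M) / \<epsilon>\<^sup>2"
    using integral_square_martingale_transform_le[OF c c_le] by (simp add: Y_def divide_right_mono)
  also have "(\<Sum>j<m+p. \<integral>\<omega>. (c j \<omega>)\<^sup>2 \<partial>M) = (\<Sum>j\<in>{m..<m+p}. \<integral>\<omega>. (c j \<omega>)\<^sup>2 \<partial>M)"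
    by (intro sum.mono_neutral_right) (auto simp: c_def)
  also have "\<dots> \<le> (\<Sum>j\<in>{m..<m+p}. \<integral>\<omega>. (a j \<omega>)\<^sup>2 \<partial>M)"
  proof (intro sum_mono integral_mono)
    show "integrable M (\<lambda>\<omega>. (c j \<omega>)\<^sup>2)" "integrable M (\<lambda>\<omega>. (a j \<omega>)\<^sup>2)" for j
      using integrable_square_if_abs_le_1 c_le a_le by simp_all
  qed (auto simp: c_def)
  finally show ?thesis
    using C_nonneg by (simp add: S_def mult_left_mono divide_right_mono)
qed

lemma maximal_inequality_tail:
  assumes a: "\<And>j. a j \<in> borel_measurable (G j)" and a_le: "\<And>j \<omega>. \<bar>a j \<omega>\<bar> \<le> 1" and "0 < \<epsilon>"
    and summable: "summable (\<lambda>j. \<integral>\<omega>. (a j \<omega>)\<^sup>2 \<partial>M)"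
  shows "measure M {\<omega>\<in>space M. \<exists>i\<ge>m. \<epsilon> \<le> \<bar>martingale_transform a i \<omega> - martingale_transform a m \<omega>\<bar>}
     \<le> C / \<epsilon>\<^sup>2 * (\<Sum>j. \<integral>\<omega>. (a (j + m) \<omega>)\<^sup>2 \<partial>M)"
proof -
  define S where "S = martingale_transform a"
  have [measurable]: "S i \<in> borel_measurable M" for i
    unfolding S_def using measurable_G_imp_M[OF measurable_martingale_transform[OF a]] .
  define A where "A p = {\<omega>\<in>space M. \<exists>i\<in>{m..m+p}. \<epsilon> \<le> \<bar>S i \<omega> - S m \<omega>\<bar>}" for p
  have A: "range A \<subseteq> sets M" "incseq A"
    unfolding A_def incseq_def by (auto intro!: pred_intros_finite)
  have "measure M (A p) \<le> C / \<epsilon>\<^sup>2 * (\<Sum>j. \<integral>\<omega>. (a (j + m) \<omega>)\<^sup>2 \<partial>M)" for p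
  proof -
    have "(\<Sum>j\<in>{m..<m+p}. \<integral>\<omega>. (a j \<omega>)\<^sup>2 \<partial>M) = (\<Sum>j<p. \<integral>\<omega>. (a (j + m) \<omega>)\<^sup>2 \<partial>M)"
      using sum.shift_bounds_nat_ivl[of _ 0 m p] by (simp add: add.commute atLeast0LessThan)
    also have "\<dots> \<le> (\<Sum>j. \<integral>\<omega>. (a (j + m) \<omega>)\<^sup>2 \<partial>M)"
      using summable_ignore_initial_segment[OF summable, of m] by (intro sum_le_suminf) auto
    finally have partial_le: "(\<Sum>j\<in>{m..<m+p}. \<integral>\<omega>. (a j \<omega>)\<^sup>2 \<partial>M) \<le> (\<Sum>j. \<integral>\<omega>. (a (j + m) \<omega>)\<^sup>2 \<partial>M)" .
    have "measure M (A p) \<le> C / \<epsilon>\<^sup>2 * (\<Sum>j\<in>{m..<m+p}. \<integral>\<omega>. (a j \<omega>)\<^sup>2 \<partial>M)"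
      unfolding A_def S_def by (rule maximal_inequality[OF a a_le \<open>0 < \<epsilon>\<close>])
    also have "\<dots> \<le> C / \<epsilon>\<^sup>2 * (\<Sum>j. \<integral>\<omega>. (a (j + m) \<omega>)\<^sup>2 \<partial>M)"
      using partial_le C_nonneg by (intro mult_left_mono) auto
    finally show ?thesis .
  qed
  then have "measure M (\<Union>p. A p) \<le> C / \<epsilon>\<^sup>2 * (\<Sum>j. \<integral>\<omega>. (a (j + m) \<omega>)\<^sup>2 \<partial>M)"
    by (intro LIMSEQ_le_const2[OF finite_Lim_measure_incseq[OF A]]) auto
  moreover have "(\<Union>p. A p) = {\<omega>\<in>space M. \<exists>i\<ge>m. \<epsilon> \<le> \<bar>S i \<omega> - S m \<omega>\<bar>}"
    unfolding A_def by auto (metis atLeastAtMost_iff le_add_diff_inverse order_refl)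
  ultimately show ?thesis
    by (simp add: S_def)
qed

lemma oscillation_martingale_transform_null:
  assumes a: "\<And>j. a j \<in> borel_measurable (G j)" and a_le: "\<And>j \<omega>. \<bar>a j \<omega>\<bar> \<le> 1" and "0 < \<epsilon>"
    and summable: "summable (\<lambda>j. \<integral>\<omega>. (a j \<omega>)\<^sup>2 \<partial>M)"
  shows "{\<omega>\<in>space M. \<forall>m. \<exists>i\<ge>m. \<epsilon> \<le> \<bar>martingale_transform a i \<omega> - martingale_transform a m \<omega>\<bar>}
    \<in> null_sets M"
proof -
  define S where "S = martingale_transform a"
  have [measurable]: "S i \<in> borel_measurable M" for i
    unfolding S_def using measurable_G_imp_M[OF measurable_martingale_transform[OF a]] .
  define Bad where "Bad = {\<omega>\<in>space M. \<forall>m. \<exists>i\<ge>m. \<epsilon> \<le> \<bar>S i \<omega> - S m \<omega>\<bar>}"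
  have [measurable]: "Bad \<in> sets M"
    unfolding Bad_def by measurable
  have "measure M Bad \<le> C / \<epsilon>\<^sup>2 * (\<Sum>j. \<integral>\<omega>. (a (j + m) \<omega>)\<^sup>2 \<partial>M)" for m
  proof -
    have "Bad \<subseteq> {\<omega>\<in>space M. \<exists>i\<ge>m. \<epsilon> \<le> \<bar>S i \<omega> - S m \<omega>\<bar>}"
      unfolding Bad_def by blast
    then have "measure M Bad \<le> measure M {\<omega>\<in>space M. \<exists>i\<ge>m. \<epsilon> \<le> \<bar>S i \<omega> - S m \<omega>\<bar>}"
      by (intro finite_measure_mono) measurable
    also have "\<dots> \<le> C / \<epsilon>\<^sup>2 * (\<Sum>j. \<integral>\<omega>. (a (j + m) \<omega>)\<^sup>2 \<partial>M)"
      unfolding S_def by (rule maximal_inequality_tail[OF a a_le \<open>0 < \<epsilon>\<close> summable])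
    finally show ?thesis .
  qed
  moreover have "(\<lambda>m. C / \<epsilon>\<^sup>2 * (\<Sum>j. \<integral>\<omega>. (a (j + m) \<omega>)\<^sup>2 \<partial>M)) \<longlonglongrightarrow> C / \<epsilon>\<^sup>2 * 0"
    by (intro tendsto_mult tendsto_const suminf_exist_split2 summable)
  ultimately have "measure M Bad \<le> 0"
    by (intro LIMSEQ_le_const) auto
  then have "Bad \<in> null_sets M"
    by (simp add: emeasure_eq_measure null_sets_def measure_le_0_iff)
  then show ?thesis
    by (simp only: Bad_def S_def)
qed

lemma AE_summable_martingale_transform:
  assumes a: "\<And>j. a j \<in> borel_measurable (G j)" and a_le: "\<And>j \<omega>. \<bar>a j \<omega>\<bar> \<le> 1"
    and summable: "summable (\<lambda>j. \<integral>\<omega>. (a j \<omega>)\<^sup>2 \<partial>M)"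
  shows "AE \<omega> in M. summable (\<lambda>j. a j \<omega> * x j \<omega>)"
proof -
  define S where "S = martingale_transform a"
  define Bad where "Bad \<epsilon> = {\<omega>\<in>space M. \<forall>m. \<exists>i\<ge>m. \<epsilon> \<le> \<bar>S i \<omega> - S m \<omega>\<bar>}" for \<epsilon>
  have "Bad \<epsilon> \<in> null_sets M" if "0 < \<epsilon>" for \<epsilon>
    unfolding Bad_def S_def by (rule oscillation_martingale_transform_null[OF a a_le that summable])
  then have "AE \<omega> in M. \<forall>r::nat. \<omega> \<notin> Bad (inverse (Suc r))"
    unfolding AE_all_countable by (intro allI AE_not_in) simp
  then show ?thesis
  proof (rule AE_mp[OF _ AE_I2[OF impI]])
    fix \<omega>
    assume "\<omega> \<in> space M" and good: "\<forall>r::nat. \<omega> \<notin> Bad (inverse (Suc r))"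
    have "\<exists>m. \<forall>i\<ge>m. \<bar>S i \<omega> - S m \<omega>\<bar> < \<epsilon>" if "0 < \<epsilon>" for \<epsilon>
    proof -
      obtain r where r: "inverse (Suc r) < \<epsilon>"
        using reals_Archimedean[OF \<open>0 < \<epsilon>\<close>] by auto
      then show ?thesis
        using good[rule_format, of r] \<open>\<omega> \<in> space M\<close> unfolding Bad_def
        by (auto simp: not_le) (meson less_trans not_le)
    qed
    then have "Cauchy (\<lambda>n. S n \<omega>)"
      by (rule Cauchy_if_eventually_close_to_anchor)
    then show "summable (\<lambda>j. a j \<omega> * x j \<omega>)"
      unfolding summable_iff_convergent Cauchy_convergent_iff[symmetric] S_def martingale_transform_def .
  qed
qed

text \<open>The weights are truncated at the first time their running square sum exceeds \<open>N\<close>; on the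
  event where that never happens, the truncated and the original transforms coincide.\<close>
lemma AE_summable_martingale_transform_square_summable:
  assumes l: "\<And>j. l j \<in> borel_measurable (G j)" and l_le: "\<And>j \<omega>. \<bar>l j \<omega>\<bar> \<le> 1"
    and square_summable: "AE \<omega> in M. summable (\<lambda>j. (l j \<omega>)\<^sup>2)"
  shows "AE \<omega> in M. summable (\<lambda>j. l j \<omega> * x j \<omega>)"
proof -
  define a where "a N j \<omega> = (if (\<Sum>i\<le>j. (l i \<omega>)\<^sup>2) \<le> real N then l j \<omega> else 0)" for N j \<omega>
  have a: "a N j \<in> borel_measurable (G j)" for N j
  proof -
    have "(\<lambda>\<omega>. \<Sum>i\<le>j. (l i \<omega>)\<^sup>2) \<in> borel_measurable (G j)"
      by (intro borel_measurable_sum borel_measurable_power measurable_G_mono[OF _ l]) auto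
    then show ?thesis
      using l[of j] unfolding a_def by measurable
  qed
  have a_le: "\<bar>a N j \<omega>\<bar> \<le> 1" for N j \<omega>
    using l_le[of j \<omega>] by (simp add: a_def)
  have "AE \<omega> in M. summable (\<lambda>j. a N j \<omega> * x j \<omega>)" for N
  proof (rule AE_summable_martingale_transform[OF a a_le summableI_nonneg_bounded])
    have a2: "integrable M (\<lambda>\<omega>. (a N j \<omega>)\<^sup>2)" for j
      using integrable_square_if_abs_le_1 measurable_G_imp_M[OF a] a_le by blast
    fix n
    have "(\<Sum>j<n. \<integral>\<omega>. (a N j \<omega>)\<^sup>2 \<partial>M) = (\<integral>\<omega>. (\<Sum>j<n. (a N j \<omega>)\<^sup>2) \<partial>M)"
      using a2 by (simp add: Bochner_Integration.integral_sum)
    also have "\<dots> \<le> (\<integral>\<omega>. real N \<partial>M)"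
      using a2 truncated_square_sum_le[of "real N"] by (intro integral_mono) (auto simp: a_def)
    finally show "(\<Sum>j<n. \<integral>\<omega>. (a N j \<omega>)\<^sup>2 \<partial>M) \<le> real N"
      by (simp add: prob_space)
  qed simp
  then have "AE \<omega> in M. \<forall>N. summable (\<lambda>j. a N j \<omega> * x j \<omega>)"
    by (simp add: AE_all_countable)
  then show ?thesis
    using square_summable
  proof eventually_elim
    case (elim \<omega>)
    obtain N :: nat where N: "(\<Sum>j. (l j \<omega>)\<^sup>2) \<le> real N"
      using real_arch_simple by blast
    have "a N j \<omega> = l j \<omega>" for j
      using sum_le_suminf[OF elim(2), of "{..j}"] N by (simp add: a_def)
    then show ?case
      using elim(1)[rule_format, of N] by simp
  qed
qed

end

theorem proposition4p2:
  fixes Mop :: "('y::finite \<Rightarrow> real) \<Rightarrow> ('y \<Rightarrow> real) \<Rightarrow> ('y \<Rightarrow> real)"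
    and fstar :: "'y \<Rightarrow> real" and \<rho> \<beta> :: real
    and M :: "'a measure"
    and I :: "nat \<Rightarrow> 'y \<Rightarrow> 'a measure"
    and fhat :: "nat \<Rightarrow> 'a \<Rightarrow> 'y \<Rightarrow> real"
    and \<eta> \<xi> lam :: "nat \<Rightarrow> 'a \<Rightarrow> 'y \<Rightarrow> real"
  assumes rho: "0 < \<rho>" "\<rho> < 1" and beta: "0 < \<beta>"
    and M_le: "\<And>\<eta>' f y. (\<forall>z. 0 \<le> \<eta>' z \<and> \<eta>' z \<le> 1) \<Longrightarrow> Mop \<eta>' f y \<le> fstar y"
    and M_contr: "\<And>\<eta>' f. (\<forall>z. 0 \<le> \<eta>' z \<and> \<eta>' z \<le> 1) \<Longrightarrow>
        supnorm (\<lambda>y. fstar y - Mop \<eta>' f y)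
          \<le> \<rho> * supnorm (\<lambda>y. fstar y - f y) + \<beta> * supnorm (pospart (\<lambda>y. f y - fstar y))
             + \<beta> * supnorm \<eta>'"
    and P: "prob_space M"
    and sub: "\<And>k y. subalgebra M (I k y)"
    and filt: "\<And>k y y'. sets (I k y) \<subseteq> sets (I (Suc k) y')"
    and f0_meas: "\<And>y. (\<lambda>\<omega>. fhat 0 \<omega> y) \<in> borel_measurable (I 0 y)"
    and eta_range: "\<And>k \<omega> y. 0 \<le> \<eta> k \<omega> y \<and> \<eta> k \<omega> y \<le> 1"
    and eta_meas: "\<And>k y y'. (\<lambda>\<omega>. \<eta> k \<omega> y') \<in> borel_measurable (I k y)"
    and xi_meas: "\<And>k y. 1 \<le> k \<Longrightarrow> (\<lambda>\<omega>. \<xi> k \<omega> y) \<in> borel_measurable (I k y)"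
    and lam_range: "\<And>k \<omega> y. 0 \<le> lam k \<omega> y \<and> lam k \<omega> y \<le> 1"
    and lam_meas: "\<And>k y. (\<lambda>\<omega>. lam k \<omega> y) \<in> borel_measurable (I k y)"
    and as: "AE \<omega> in M. \<forall>y. (\<lambda>k. \<eta> k \<omega> y) \<longlonglongrightarrow> 0
                \<and> \<not> summable (\<lambda>k. lam k \<omega> y)
                \<and> summable (\<lambda>k. (lam k \<omega> y)\<^sup>2)"
    and noise: "\<exists>C>0. \<forall>k y.
        (AE \<omega> in M. real_cond_exp M (I k y) (\<lambda>\<omega>. \<xi> (Suc k) \<omega> y) \<omega> = 0)
      \<and> (AE \<omega> in M. nn_cond_exp M (I k y) (\<lambda>\<omega>. ennreal ((\<xi> (Suc k) \<omega> y)\<^sup>2)) \<omega> \<le> ennreal C)"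
    and rec: "\<And>k \<omega> y. fhat (Suc k) \<omega> y = fhat k \<omega> y
        + lam k \<omega> y * (Mop (\<eta> k \<omega>) (fhat k \<omega>) y - fhat k \<omega> y + \<xi> (Suc k) \<omega> y)"
  shows "AE \<omega> in M. \<forall>y. (\<lambda>k. fhat k \<omega> y) \<longlonglongrightarrow> fstar y"
proof -
  \<comment> \<open>Only the noise needs adaptedness; the rest of the argument is pathwise.\<close>
  obtain C where "0 < C" and noise_C: "\<And>k y.
        (AE \<omega> in M. real_cond_exp M (I k y) (\<lambda>\<omega>. \<xi> (Suc k) \<omega> y) \<omega> = 0)
      \<and> (AE \<omega> in M. nn_cond_exp M (I k y) (\<lambda>\<omega>. ennreal ((\<xi> (Suc k) \<omega> y)\<^sup>2)) \<omega> \<le> ennreal C)"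
    using noise by blast
  have "AE \<omega> in M. summable (\<lambda>k. lam k \<omega> y * \<xi> (Suc k) \<omega> y)" for y
  proof -
    interpret martingale_differences M "\<lambda>k. I k y" "\<lambda>k \<omega>. \<xi> (Suc k) \<omega> y" C
      using P sub filt xi_meas noise_C \<open>0 < C\<close>
      by (intro martingale_differences.intro martingale_differences_axioms.intro) auto
    show ?thesis
      using lam_meas lam_range as
      by (intro AE_summable_martingale_transform_square_summable) (auto elim: eventually_mono)
  qed
  then have "AE \<omega> in M. \<forall>y. summable (\<lambda>k. lam k \<omega> y * \<xi> (Suc k) \<omega> y)"
    by (rule eventually_all_finite)
  with as show ?thesis
  proof eventually_elim
    case (elim \<omega>)
    show ?case
      using rec lam_range eta_range M_le M_contr rho beta elim
      by (intro allI operator_relaxation_with_summable_noise_tendsto[where F="\<lambda>k. fhat k \<omega>"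
          and \<eta>="\<lambda>k. \<eta> k \<omega>" and l="\<lambda>k. lam k \<omega>" and \<xi>="\<lambda>k. \<xi> k \<omega>" and \<rho>=\<rho> and \<beta>=\<beta>]) auto
  qed
qed

end
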